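(* Let $k,d>0$, $b,\tilde b\ge0$ be constants and $\eta_1,\eta_2,c_1,c_2,\tilde c_1,\tilde c_2\ge0$, with $c_1^{tot}:=\eta_1+c_1>0$, $c_2^{tot}:=\eta_2+c_2$, $\tilde c_2>0$, and $b/k+\tilde b/d<1$. Consider $$\frac{dN_1}{dt}=-\big(k+c_1^{tot}N_1+c_2^{tot}N_2\big)N_1+bN_1+\tilde bN_2,\qquad \frac{dN_2}{dt}=-\big(d+\tilde c_1N_1+\tilde c_2N_2\big)N_2+\big(k+\eta_1N_1+\eta_2N_2\big)N_1,$$ with nonnegative initial data. Then, for $\tilde b$ small enough (relative to the other parameters), $(0,0)$ is the unique steady state in $\mathbb{R}_+^2$ and it is stable; moreover every trajectory converges to $(0,0)$. *)

theory Defs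
  imports "HOL-Analysis.Analysis"
begin

definition F1 :: "real \<Rightarrow> real \<Rightarrow> real \<Rightarrow> real \<Rightarrow> real \<Rightarrow> real \<Rightarrow> real \<Rightarrow> real \<Rightarrow> real \<Rightarrow> real" where
  "F1 k b bt eta1 eta2 c1 c2 x y =
     - (k + (eta1 + c1) * x + (eta2 + c2) * y) * x + b * x + bt * y"

definition F2 :: "real \<Rightarrow> real \<Rightarrow> real \<Rightarrow> real \<Rightarrow> real \<Rightarrow> real \<Rightarrow> real \<Rightarrow> real \<Rightarrow> real" where
  "F2 k d eta1 eta2 ct1 ct2 x y =
     - (d + ct1 * x + ct2 * y) * y + (k + eta1 * x + eta2 * y) * x"

definition is_sol ::
  "real \<Rightarrow> real \<Rightarrow> real \<Rightarrow> real \<Rightarrow> real \<Rightarrow> real \<Rightarrow> real \<Rightarrow> real \<Rightarrow> real \<Rightarrow> real \<Rightarrow>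
   (real \<Rightarrow> real) \<Rightarrow> (real \<Rightarrow> real) \<Rightarrow> bool" where
  "is_sol k d b bt eta1 eta2 c1 c2 ct1 ct2 N1 N2 \<longleftrightarrow>
     (\<forall>t\<ge>0. (N1 has_real_derivative F1 k b bt eta1 eta2 c1 c2 (N1 t) (N2 t)) (at t within {0..})
          \<and> (N2 has_real_derivative F2 k d eta1 eta2 ct1 ct2 (N1 t) (N2 t)) (at t within {0..}))"

end

theory Submission
  imports Defs "HOL-Real_Asymp.Real_Asymp"
begin

text \<open>
  Choose a weight \<open>alpha \<ge> 1\<close> with \<open>alpha * (k - b) > k\<close> and \<open>alpha * bt < d\<close>; such a weight
  exists exactly when \<open>b / k + bt / d < 1\<close>. For \<open>V = alpha * N1 + N2\<close> the linear part of
  \<open>V'\<close> is then negative, and all quadratic terms have nonpositive coefficients because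
  \<open>alpha \<ge> 1\<close>, so \<open>V' \<le> - mu * V\<close> on the nonnegative quadrant. The quadrant is forward
  invariant because the vector field is quasi-positive (\<open>F1 \<ge> 0\<close> where \<open>N1 = 0\<close>, and
  \<open>F2 \<ge> 0\<close> where \<open>N2 = 0\<close>), which is made quantitative by a Gronwall-type estimate on
  short intervals. Hence \<open>V\<close> decays exponentially along every
  nonnegative solution, which yields the uniqueness of the steady state, its stability and
  global convergence at once.
\<close>

lemma mvt_has_real_derivative_within:
  fixes f f' :: "real \<Rightarrow> real"
  assumes "s < u" "{s..u} \<subseteq> S"
    and "\<And>t. t \<in> S \<Longrightarrow> (f has_real_derivative f' t) (at t within S)"
  shows "\<exists>z\<in>{s<..<u}. f u - f s = (u - s) * f' z"
proof -
  have "\<exists>z\<in>{s<..<u}. f u - f s = (*) (f' z) (u - s)"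
  proof (rule mvt_simple[OF \<open>s < u\<close>])
    fix z assume "s \<le> z" "z \<le> u"
    with assms show "(f has_derivative (*) (f' z)) (at z within {s..u})"
      by (intro has_field_derivative_imp_has_derivative has_field_derivative_subset[OF _ assms(2)]) auto
  qed
  then show ?thesis
    by (simp add: mult.commute)
qed

lemma descent_time_lower_bound:
  fixes u u' :: "real \<Rightarrow> real"
  assumes der: "\<And>t. t \<in> S \<Longrightarrow> (u has_real_derivative u' t) (at t within S)"
    and sub: "{t0..t1} \<subseteq> S" and "t0 \<le> t1" and "u t0 \<ge> 0"
    and target: "u t1 = -m" "m > 0"
    and rate: "\<And>z. z \<in> {t0<..<t1} \<Longrightarrow> u z < 0 \<Longrightarrow> u' z \<ge> -(C * m)"
  shows "1 \<le> C * (t1 - t0)"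
proof -
  define Z where "Z = {t0..t1} \<inter> u -` {0..}"
  define s0 where "s0 = Sup Z"
  have "continuous_on {t0..t1} u"
    using continuous_on_subset[OF DERIV_continuous_on[OF der] sub] .
  then have "closed Z"
    unfolding Z_def by (intro continuous_closed_preimage) auto
  moreover have "t0 \<in> Z" "bdd_above Z"
    using assms unfolding Z_def by (auto intro: bdd_aboveI[of _ t1])
  ultimately have "s0 \<in> Z"
    unfolding s0_def using closed_contains_Sup by blast
  then have s0: "t0 \<le> s0" "s0 \<le> t1" "u s0 \<ge> 0"
    unfolding Z_def by auto
  with target have "s0 < t1"
    by (cases "s0 = t1") auto
  have after_s0_negative: "u z < 0" if "s0 < z" "z \<le> t1" for z
  proof (rule ccontr)
    assume "\<not> u z < 0"
    then have "z \<in> Z"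
      using that s0 unfolding Z_def by auto
    then show False
      using \<open>bdd_above Z\<close> cSup_upper that unfolding s0_def by fastforce
  qed
  obtain z where z: "s0 < z" "z < t1" "u t1 - u s0 = (t1 - s0) * u' z"
    using mvt_has_real_derivative_within[OF \<open>s0 < t1\<close> _ der] s0 sub by fastforce
  have "u' z \<ge> -(C * m)"
    using rate after_s0_negative z s0 by auto
  then have "(t1 - s0) * u' z \<ge> (t1 - s0) * -(C * m)"
    using \<open>s0 < t1\<close> by (intro mult_left_mono) auto
  then have "m \<le> (C * (t1 - s0)) * m"
    using z target s0 by (simp add: algebra_simps)
  then have "1 \<le> C * (t1 - s0)"
    using \<open>m > 0\<close> by simp
  moreover from this have "C > 0"
    using \<open>s0 < t1\<close> zero_less_mult_iff[of C "t1 - s0"] by linarith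
  then have "C * (t1 - s0) \<le> C * (t1 - t0)"
    using s0 by (intro mult_left_mono) auto
  ultimately show ?thesis
    by linarith
qed

lemma nonneg_pair_on_short_interval:
  fixes u v u' v' :: "real \<Rightarrow> real"
  assumes du: "\<And>t. t \<in> S \<Longrightarrow> (u has_real_derivative u' t) (at t within S)"
    and dv: "\<And>t. t \<in> S \<Longrightarrow> (v has_real_derivative v' t) (at t within S)"
    and sub: "{t0..t1} \<subseteq> S" and start: "u t0 \<ge> 0" "v t0 \<ge> 0" and short: "C * (t1 - t0) < 1"
    and rate_u: "\<And>z m. z \<in> {t0<..<t1} \<Longrightarrow> -m \<le> u z \<Longrightarrow> u z < 0 \<Longrightarrow> -m \<le> v z \<Longrightarrow>
      u' z \<ge> -(C * m)"
    and rate_v: "\<And>z m. z \<in> {t0<..<t1} \<Longrightarrow> -m \<le> v z \<Longrightarrow> v z < 0 \<Longrightarrow> -m \<le> u z \<Longrightarrow>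
      v' z \<ge> -(C * m)"
    and t: "t \<in> {t0..t1}"
  shows "u t \<ge> 0 \<and> v t \<ge> 0"
proof (rule ccontr)
  assume "\<not> (u t \<ge> 0 \<and> v t \<ge> 0)"
  have "continuous_on {t0..t1} (\<lambda>s. max (- u s) (- v s))"
    by (intro continuous_intros continuous_on_subset[OF DERIV_continuous_on[OF du] sub]
        continuous_on_subset[OF DERIV_continuous_on[OF dv] sub])
  then obtain s1 where s1: "s1 \<in> {t0..t1}"
    and s1_max: "\<And>z. z \<in> {t0..t1} \<Longrightarrow> max (- u z) (- v z) \<le> max (- u s1) (- v s1)"
    using continuous_attains_sup[OF compact_Icc] t by blast
  define m where "m = max (- u s1) (- v s1)"
  have "m > 0"
    using s1_max[OF t] \<open>\<not> (u t \<ge> 0 \<and> v t \<ge> 0)\<close> unfolding m_def by linarith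
  have lower: "u z \<ge> -m" "v z \<ge> -m" if "z \<in> {t0..s1}" for z
    using s1_max[of z] s1 that unfolding m_def by auto
  have "C * (s1 - t0) < 1"
  proof (cases "C \<ge> 0")
    case True
    then have "C * (s1 - t0) \<le> C * (t1 - t0)"
      using s1 by (intro mult_left_mono) auto
    then show ?thesis
      using short by linarith
  next
    case False
    then show ?thesis
      using s1 mult_nonpos_nonneg[of C "s1 - t0"] by simp
  qed
  \<comment> \<open>At \<open>s1\<close> one of \<open>u\<close>, \<open>v\<close> has fallen from \<open>0\<close> to \<open>-m\<close> at rate at most \<open>C * m\<close>,
    which takes time at least \<open>1 / C\<close>.\<close>
  consider "u s1 = -m" | "v s1 = -m"
    unfolding m_def by linarith
  then have "1 \<le> C * (s1 - t0)"
  proof cases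
    case 1
    show ?thesis
    proof (rule descent_time_lower_bound[OF du _ _ start(1) 1 \<open>m > 0\<close>])
      fix z assume "z \<in> {t0<..<s1}" "u z < 0"
      then show "u' z \<ge> -(C * m)"
        using rate_u[of z m] lower[of z] s1 by auto
    qed (use s1 sub in auto)
  next
    case 2
    show ?thesis
    proof (rule descent_time_lower_bound[OF dv _ _ start(2) 2 \<open>m > 0\<close>])
      fix z assume "z \<in> {t0<..<s1}" "v z < 0"
      then show "v' z \<ge> -(C * m)"
        using rate_v[of z m] lower[of z] s1 by auto
    qed (use s1 sub in auto)
  qed
  then show False
    using \<open>C * (s1 - t0) < 1\<close> by linarith
qed

lemma nonneg_by_continuation:
  fixes f :: "real \<Rightarrow> real"
  assumes cont: "continuous_on {0..} f" and "f 0 \<ge> 0"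
    and extend: "\<And>T. T \<ge> 0 \<Longrightarrow> f T \<ge> 0 \<Longrightarrow> \<exists>r>0. \<forall>s\<in>{T..T+r}. f s \<ge> 0"
    and "t \<ge> 0"
  shows "f t \<ge> 0"
proof (rule ccontr)
  assume "\<not> f t \<ge> 0"
  define N where "N = {s \<in> {0..t}. f s < 0}"
  define T where "T = Inf N"
  have "t \<in> N" "bdd_below N"
    using \<open>\<not> f t \<ge> 0\<close> \<open>t \<ge> 0\<close> unfolding N_def by (auto intro: bdd_belowI[of _ 0])
  then have "T \<ge> 0" and T_lower: "\<And>s. s \<in> N \<Longrightarrow> T \<le> s"
    unfolding T_def N_def by (auto intro: cInf_greatest cInf_lower)
  have before_T: "f s \<ge> 0" if "0 \<le> s" "s < T" for s
    using T_lower[of s] T_lower[OF \<open>t \<in> N\<close>] that unfolding N_def by force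
  have "f T \<ge> 0"
  proof (cases "T = 0")
    case True
    then show ?thesis using \<open>f 0 \<ge> 0\<close> by simp
  next
    case False
    then have "closure {0..<T} = {0..T}"
      using \<open>T \<ge> 0\<close> by simp
    then show ?thesis
      using continuous_ge_on_closure[of "{0..<T}" f T 0] continuous_on_subset[OF cont]
        before_T \<open>T \<ge> 0\<close> by auto
  qed
  then obtain r where "r > 0" and after_T: "\<forall>s\<in>{T..T+r}. f s \<ge> 0"
    using extend \<open>T \<ge> 0\<close> by blast
  obtain s where "s \<in> N" "s < T + r"
    using cInf_lessD[of N "T + r"] \<open>t \<in> N\<close> \<open>r > 0\<close> unfolding T_def by auto
  then have "s \<in> {T..T+r}" "f s < 0"
    using T_lower[of s] unfolding N_def by auto
  then show False
    using after_T by force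
qed

lemma exp_decay_of_deriv_le:
  fixes V V' :: "real \<Rightarrow> real"
  assumes der: "\<And>t. t \<in> {0..} \<Longrightarrow> (V has_real_derivative V' t) (at t within {0..})"
    and decay: "\<And>t. t \<ge> 0 \<Longrightarrow> V' t \<le> - mu * V t" and "t \<ge> 0"
  shows "V t \<le> V 0 * exp (- mu * t)"
proof (cases "t = 0")
  case False
  define W' where "W' s = (V' s + mu * V s) * exp (mu * s)" for s
  have dW: "((\<lambda>s. V s * exp (mu * s)) has_real_derivative W' s) (at s within {0..})"
    if "s \<in> {0..}" for s
    using der[OF that] unfolding W'_def by (auto intro!: derivative_eq_intros simp: algebra_simps)
  have "0 < t"
    using False \<open>t \<ge> 0\<close> by simp
  then have "\<exists>z\<in>{0<..<t}. V t * exp (mu * t) - V 0 * exp (mu * 0) = (t - 0) * W' z"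
    by (rule mvt_has_real_derivative_within[OF _ _ dW]) auto
  then obtain z where "z \<in> {0<..<t}" "V t * exp (mu * t) - V 0 = t * W' z"
    by auto
  have "W' z \<le> 0"
    using decay[of z] \<open>z \<in> {0<..<t}\<close> unfolding W'_def by (simp add: mult_nonpos_nonneg)
  then have "t * W' z \<le> 0"
    using \<open>0 < t\<close> by (simp add: mult_nonneg_nonpos)
  then have "V t * exp (mu * t) \<le> V 0"
    using \<open>V t * exp (mu * t) - V 0 = t * W' z\<close> by linarith
  then show ?thesis
    by (simp add: exp_minus field_simps)
qed simp

locale nonneg_rates =
  fixes k d b bt eta1 eta2 c1 c2 ct1 ct2 :: real
  assumes k_pos: "k > 0"
    and rates_nonneg: "d \<ge> 0" "b \<ge> 0" "bt \<ge> 0" "eta1 \<ge> 0" "eta2 \<ge> 0"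
      "c1 \<ge> 0" "c2 \<ge> 0" "ct1 \<ge> 0" "ct2 \<ge> 0"
begin

abbreviation "f1 \<equiv> F1 k b bt eta1 eta2 c1 c2"
abbreviation "f2 \<equiv> F2 k d eta1 eta2 ct1 ct2"
abbreviation "solution \<equiv> is_sol k d b bt eta1 eta2 c1 c2 ct1 ct2"

lemma solution_has_derivative:
  assumes "solution x y" and "t \<in> {0..}"
  shows "(x has_real_derivative f1 (x t) (y t)) (at t within {0..})"
    and "(y has_real_derivative f2 (x t) (y t)) (at t within {0..})"
  using assms unfolding is_sol_def by auto

lemma F1_lower_bound:
  assumes "-m \<le> x" "x < 0" "-m \<le> y" "\<bar>x\<bar> \<le> B" "\<bar>y\<bar> \<le> B"
  shows "f1 x y \<ge> -((k + b + (eta1 + c1) * B + (eta2 + c2) * B + bt) * m)"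
proof -
  define G where "G = k + b + (eta1 + c1) * B + (eta2 + c2) * B"
  define a where "a = k - b + (eta1 + c1) * x + (eta2 + c2) * y"
  have loss: "- (a * x) \<ge> - (G * m)"
  proof -
    have "a + G = 2 * k + (eta1 + c1) * (x + B) + (eta2 + c2) * (y + B)"
      unfolding a_def G_def by (simp add: algebra_simps)
    also have "\<dots> \<ge> 0"
      using assms k_pos rates_nonneg by (simp add: abs_le_iff)
    finally have "a * x \<le> - (G * x)"
      using mult_right_mono_neg[of "-G" a x] assms by simp
    moreover have "G \<ge> 0"
      unfolding G_def using assms k_pos rates_nonneg by simp
    then have "- (G * x) \<le> G * m"
      using mult_left_mono[of "-x" m G] assms by simp
    ultimately show ?thesis
      by linarith
  qed
  have gain: "bt * y \<ge> - (bt * m)"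
    using mult_left_mono[of "-m" y bt] assms rates_nonneg by simp
  have "f1 x y = - (a * x) + bt * y"
    unfolding F1_def a_def by (simp add: algebra_simps)
  then have "f1 x y \<ge> - (G * m) - bt * m"
    using loss gain by linarith
  then show ?thesis
    unfolding G_def by (simp add: algebra_simps)
qed

lemma F2_lower_bound:
  assumes "-m \<le> y" "y < 0" "-m \<le> x" "\<bar>x\<bar> \<le> B" "\<bar>y\<bar> \<le> B"
    and "k + eta1 * x + eta2 * y \<ge> 0"
  shows "f2 x y \<ge> -((d + ct1 * B + ct2 * B + k + eta1 * B + eta2 * B) * m)"
proof -
  define H where "H = d + ct1 * B + ct2 * B"
  define P where "P = k + eta1 * B + eta2 * B"
  define a where "a = d + ct1 * x + ct2 * y"
  define p where "p = k + eta1 * x + eta2 * y"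
  have loss: "- (a * y) \<ge> - (H * m)"
  proof -
    have "a + H = 2 * d + ct1 * (x + B) + ct2 * (y + B)"
      unfolding a_def H_def by (simp add: algebra_simps)
    also have "\<dots> \<ge> 0"
      using assms rates_nonneg by (simp add: abs_le_iff)
    finally have "a * y \<le> - (H * y)"
      using mult_right_mono_neg[of "-H" a y] assms by simp
    moreover have "H \<ge> 0"
      unfolding H_def using assms rates_nonneg by simp
    then have "- (H * y) \<le> H * m"
      using mult_left_mono[of "-y" m H] assms by simp
    ultimately show ?thesis
      by linarith
  qed
  have gain: "p * x \<ge> - (P * m)"
  proof -
    have "P - p = eta1 * (B - x) + eta2 * (B - y)"
      unfolding P_def p_def by (simp add: algebra_simps)
    moreover have "eta1 * (B - x) \<ge> 0" "eta2 * (B - y) \<ge> 0"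
      using assms rates_nonneg by (simp_all add: abs_le_iff)
    moreover have "m > 0"
      using assms by linarith
    ultimately have "p * m \<le> P * m"
      by (simp add: mult_right_mono)
    moreover have "p * x \<ge> - (p * m)"
      using mult_left_mono[of "-m" x p] assms unfolding p_def by simp
    ultimately show ?thesis
      by linarith
  qed
  have "f2 x y = - (a * y) + p * x"
    unfolding F2_def a_def p_def by (simp add: algebra_simps)
  then have "f2 x y \<ge> - (H * m) - P * m"
    using loss gain by linarith
  then show ?thesis
    unfolding H_def P_def by (simp add: algebra_simps)
qed

lemma solution_continuous:
  assumes "solution x y"
  shows "continuous_on {0..} x" "continuous_on {0..} y"
  using DERIV_continuous_on[OF solution_has_derivative(1)[OF assms]]
    DERIV_continuous_on[OF solution_has_derivative(2)[OF assms]] by simp_all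

lemma solution_production_pos_near:
  assumes sol: "solution x y" and "t0 \<ge> 0" "x t0 \<ge> 0" "y t0 \<ge> 0"
  obtains r where "r > 0" "\<And>s. s \<in> {t0..<t0+r} \<Longrightarrow> k + eta1 * x s + eta2 * y s > 0"
proof -
  define p where "p s = k + eta1 * x s + eta2 * y s" for s
  have "continuous_on {0..} p"
    unfolding p_def by (intro continuous_intros solution_continuous[OF sol])
  moreover have "p t0 > 0"
    unfolding p_def using assms k_pos rates_nonneg by (simp add: add_pos_nonneg)
  ultimately obtain r where "r > 0" and r: "\<forall>s\<in>{0..}. dist s t0 < r \<longrightarrow> dist (p s) (p t0) < p t0"
    using \<open>t0 \<ge> 0\<close> unfolding continuous_on_iff by (metis atLeast_iff)
  have "p s > 0" if "s \<in> {t0..<t0+r}" for s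
    using r[rule_format, of s] that \<open>t0 \<ge> 0\<close> by (auto simp: dist_real_def)
  then show thesis
    using that \<open>r > 0\<close> unfolding p_def by blast
qed

lemma solution_bounded_near:
  assumes sol: "solution x y" and "t0 \<ge> 0"
  obtains B where "\<And>s. s \<in> {t0..t0+1} \<Longrightarrow> \<bar>x s\<bar> + \<bar>y s\<bar> \<le> B"
proof -
  have "bounded ((\<lambda>s. \<bar>x s\<bar> + \<bar>y s\<bar>) ` {t0..t0+1})"
    using \<open>t0 \<ge> 0\<close>
    by (intro compact_imp_bounded compact_continuous_image continuous_intros compact_Icc
        continuous_on_subset[OF solution_continuous(1)[OF sol]]
        continuous_on_subset[OF solution_continuous(2)[OF sol]]) auto
  then show thesis
    using that unfolding bounded_real by fastforce
qed

lemma solution_rate_bounds_near: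
  assumes sol: "solution x y" and "t0 \<ge> 0" "x t0 \<ge> 0" "y t0 \<ge> 0"
  obtains r C where "r > 0" "C * r < 1"
    "\<And>z m. z \<in> {t0<..<t0+r} \<Longrightarrow> -m \<le> x z \<Longrightarrow> x z < 0 \<Longrightarrow> -m \<le> y z \<Longrightarrow>
      f1 (x z) (y z) \<ge> -(C * m)"
    "\<And>z m. z \<in> {t0<..<t0+r} \<Longrightarrow> -m \<le> y z \<Longrightarrow> y z < 0 \<Longrightarrow> -m \<le> x z \<Longrightarrow>
      f2 (x z) (y z) \<ge> -(C * m)"
proof -
  obtain r1 where "r1 > 0" and production_pos:
    "\<And>s. s \<in> {t0..<t0+r1} \<Longrightarrow> k + eta1 * x s + eta2 * y s > 0"
    using solution_production_pos_near[OF assms] by blast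
  obtain B where B: "\<And>s. s \<in> {t0..t0+1} \<Longrightarrow> \<bar>x s\<bar> + \<bar>y s\<bar> \<le> B"
    using solution_bounded_near[OF sol \<open>t0 \<ge> 0\<close>] by blast
  define G where "G = k + b + (eta1 + c1) * B + (eta2 + c2) * B + bt"
  define H where "H = d + ct1 * B + ct2 * B + k + eta1 * B + eta2 * B"
  have "B \<ge> 0"
    using B[of t0] by simp
  then have "G \<ge> 0" "H \<ge> 0"
    unfolding G_def H_def using k_pos rates_nonneg by simp_all
  define r where "r = min (r1 / 2) (1 / (G + H + 1))"
  have "r > 0" "r < r1" "r \<le> 1 / (G + H + 1)"
    unfolding r_def using \<open>r1 > 0\<close> \<open>G \<ge> 0\<close> \<open>H \<ge> 0\<close> by auto
  moreover have "1 / (G + H + 1) \<le> 1"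
    using \<open>G \<ge> 0\<close> \<open>H \<ge> 0\<close> by simp
  ultimately have "r \<le> 1"
    by linarith
  have "(G + H) * r \<le> (G + H) * (1 / (G + H + 1))"
    unfolding r_def using \<open>G \<ge> 0\<close> \<open>H \<ge> 0\<close> by (intro mult_left_mono) auto
  also have "\<dots> < 1"
    using \<open>G \<ge> 0\<close> \<open>H \<ge> 0\<close> by simp
  finally have "(G + H) * r < 1" .
  show thesis
  proof (rule that[OF \<open>r > 0\<close> \<open>(G + H) * r < 1\<close>])
    fix z m assume "z \<in> {t0<..<t0+r}" "-m \<le> x z" "x z < 0" "-m \<le> y z"
    then have "f1 (x z) (y z) \<ge> -(G * m)"
      unfolding G_def using B[of z] \<open>r \<le> 1\<close> by (intro F1_lower_bound) auto
    moreover have "H * m \<ge> 0"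
      using \<open>H \<ge> 0\<close> \<open>-m \<le> x z\<close> \<open>x z < 0\<close> by simp
    ultimately show "f1 (x z) (y z) \<ge> -((G + H) * m)"
      by (simp add: distrib_right)
  next
    fix z m assume "z \<in> {t0<..<t0+r}" "-m \<le> y z" "y z < 0" "-m \<le> x z"
    then have "f2 (x z) (y z) \<ge> -(H * m)"
      unfolding H_def using B[of z] \<open>r \<le> 1\<close> production_pos[of z] \<open>r < r1\<close>
      by (intro F2_lower_bound) auto
    moreover have "G * m \<ge> 0"
      using \<open>G \<ge> 0\<close> \<open>-m \<le> y z\<close> \<open>y z < 0\<close> by simp
    ultimately show "f2 (x z) (y z) \<ge> -((G + H) * m)"
      by (simp add: distrib_right)
  qed
qed

lemma solution_nonneg_near:
  assumes sol: "solution x y" and "t0 \<ge> 0" "x t0 \<ge> 0" "y t0 \<ge> 0"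
  shows "\<exists>r>0. \<forall>s\<in>{t0..t0+r}. x s \<ge> 0 \<and> y s \<ge> 0"
proof -
  obtain r C where "r > 0" "C * r < 1"
    and rates: "\<And>z m. z \<in> {t0<..<t0+r} \<Longrightarrow> -m \<le> x z \<Longrightarrow> x z < 0 \<Longrightarrow> -m \<le> y z \<Longrightarrow>
        f1 (x z) (y z) \<ge> -(C * m)"
      "\<And>z m. z \<in> {t0<..<t0+r} \<Longrightarrow> -m \<le> y z \<Longrightarrow> y z < 0 \<Longrightarrow> -m \<le> x z \<Longrightarrow>
        f2 (x z) (y z) \<ge> -(C * m)"
    using solution_rate_bounds_near[OF assms] by blast
  have "x s \<ge> 0 \<and> y s \<ge> 0" if "s \<in> {t0..t0+r}" for s
    by (rule nonneg_pair_on_short_interval[OF solution_has_derivative[OF sol] _ assms(3,4) _ rates])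
      (use that \<open>t0 \<ge> 0\<close> \<open>C * r < 1\<close> in auto)
  then show ?thesis
    using \<open>r > 0\<close> by blast
qed

lemma solution_nonneg:
  assumes sol: "solution x y" and "x 0 \<ge> 0" "y 0 \<ge> 0" "t \<ge> 0"
  shows "x t \<ge> 0 \<and> y t \<ge> 0"
proof -
  have "min (x t) (y t) \<ge> 0"
  proof (rule nonneg_by_continuation[where f = "\<lambda>s. min (x s) (y s)"])
    show "continuous_on {0..} (\<lambda>s. min (x s) (y s))"
      by (intro continuous_intros solution_continuous[OF sol])
    fix T assume "T \<ge> 0" "min (x T) (y T) \<ge> 0"
    then show "\<exists>r>0. \<forall>s\<in>{T..T+r}. min (x s) (y s) \<ge> 0"
      using solution_nonneg_near[OF sol, of T] by simp
  qed (use assms in auto)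
  then show ?thesis
    by simp
qed

lemma weighted_F_sum_le:
  assumes "x \<ge> 0" "y \<ge> 0" "alpha \<ge> 1"
  shows "alpha * f1 x y + f2 x y \<le> - (alpha * (k - b) - k) * x - (d - alpha * bt) * y"
proof -
  have "alpha * f1 x y + f2 x y = - (alpha * (k - b) - k) * x - (d - alpha * bt) * y
      - ((alpha - 1) * eta1 + alpha * c1) * x\<^sup>2
      - ((alpha - 1) * eta2 + alpha * c2 + ct1) * (x * y) - ct2 * y\<^sup>2"
    unfolding F1_def F2_def by (simp add: algebra_simps power2_eq_square)
  moreover have "((alpha - 1) * eta1 + alpha * c1) * x\<^sup>2 \<ge> 0"
    "((alpha - 1) * eta2 + alpha * c2 + ct1) * (x * y) \<ge> 0" "ct2 * y\<^sup>2 \<ge> 0"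
    using assms rates_nonneg by simp_all
  ultimately show ?thesis
    by linarith
qed

lemma solution_weighted_decay:
  assumes sol: "solution x y" and "x 0 \<ge> 0" "y 0 \<ge> 0" and "alpha \<ge> 1"
    and "mu * alpha \<le> alpha * (k - b) - k" "mu \<le> d - alpha * bt" and "t \<ge> 0"
  shows "alpha * x t + y t \<le> (alpha * x 0 + y 0) * exp (- mu * t)"
proof (rule exp_decay_of_deriv_le[where V = "\<lambda>s. alpha * x s + y s"
      and V' = "\<lambda>s. alpha * f1 (x s) (y s) + f2 (x s) (y s)"])
  fix s :: real
  assume "s \<in> {0..}"
  then show "((\<lambda>s. alpha * x s + y s) has_real_derivative alpha * f1 (x s) (y s) + f2 (x s) (y s))
      (at s within {0..})"
    using solution_has_derivative[OF sol] by (auto intro!: derivative_eq_intros)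
next
  fix s :: real
  assume "s \<ge> 0"
  then have "x s \<ge> 0" "y s \<ge> 0"
    using solution_nonneg[OF sol] assms by auto
  then have "mu * alpha * x s \<le> (alpha * (k - b) - k) * x s" "mu * y s \<le> (d - alpha * bt) * y s"
    using assms by (auto intro: mult_right_mono)
  then show "alpha * f1 (x s) (y s) + f2 (x s) (y s) \<le> - mu * (alpha * x s + y s)"
    using weighted_F_sum_le[OF \<open>x s \<ge> 0\<close> \<open>y s \<ge> 0\<close> \<open>alpha \<ge> 1\<close>]
    by (simp add: algebra_simps)
qed (use assms in auto)

end

locale stable_rates = nonneg_rates +
  assumes d_pos: "d > 0" and small_feedback: "b / k + bt / d < 1"
begin

lemma lyapunov_weight_exists:
  obtains alpha mu where "alpha \<ge> 1" "mu > 0"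
    "mu * alpha \<le> alpha * (k - b) - k" "mu \<le> d - alpha * bt"
proof -
  have "b * d + k * bt < k * d"
    using small_feedback k_pos d_pos by (simp add: field_simps)
  moreover have "k * bt \<ge> 0"
    using rates_nonneg k_pos by simp
  ultimately have "b * d < k * d"
    by linarith
  then have "b < k"
    using mult_less_cancel_right_pos[OF d_pos] by blast
  define D where "D = d * (k - b) + k * bt"
  define E where "E = d * (k - b) - k * bt"
  have "E > 0"
    unfolding E_def using \<open>b * d + k * bt < k * d\<close> by (simp add: algebra_simps)
  moreover have "D = E + 2 * (k * bt)"
    unfolding D_def E_def by simp
  ultimately have "D > 0"
    using \<open>k * bt \<ge> 0\<close> by linarith
  \<comment> \<open>\<open>1 / alpha\<close> is the midpoint of \<open>bt / d < (k - b) / k\<close>.\<close>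
  define alpha where "alpha = 2 * k * d / D"
  have "alpha * (k - b) - k = k * E / D" "d - alpha * bt = d * E / D"
    using \<open>D > 0\<close> unfolding alpha_def D_def E_def by (simp_all add: field_simps)
  then have pos: "alpha * (k - b) - k > 0" "d - alpha * bt > 0"
    using \<open>D > 0\<close> \<open>E > 0\<close> k_pos d_pos by simp_all
  then have "1 * (k - b) < alpha * (k - b)"
    using rates_nonneg by simp
  then have "alpha \<ge> 1"
    using mult_less_cancel_right_pos[of "k - b" 1 alpha] \<open>b < k\<close> by simp
  define mu where "mu = min ((alpha * (k - b) - k) / alpha) (d - alpha * bt)"
  have "mu > 0"
    unfolding mu_def using pos \<open>alpha \<ge> 1\<close> by simp
  moreover have "mu * alpha \<le> alpha * (k - b) - k"
    unfolding mu_def using \<open>alpha \<ge> 1\<close> by (simp add: min_def field_simps)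
  moreover have "mu \<le> d - alpha * bt"
    unfolding mu_def by simp
  ultimately show thesis
    using that \<open>alpha \<ge> 1\<close> by blast
qed

lemma steady_state_iff_zero:
  assumes "x \<ge> 0" "y \<ge> 0"
  shows "f1 x y = 0 \<and> f2 x y = 0 \<longleftrightarrow> x = 0 \<and> y = 0"
proof
  assume "f1 x y = 0 \<and> f2 x y = 0"
  obtain alpha mu where "alpha \<ge> 1" "mu > 0"
    and decay: "mu * alpha \<le> alpha * (k - b) - k" "mu \<le> d - alpha * bt"
    by (rule lyapunov_weight_exists)
  have "mu * alpha * x \<le> (alpha * (k - b) - k) * x" "mu * y \<le> (d - alpha * bt) * y"
    using decay assms by (auto intro: mult_right_mono)
  moreover have "0 \<le> - (alpha * (k - b) - k) * x - (d - alpha * bt) * y"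
    using weighted_F_sum_le[OF assms \<open>alpha \<ge> 1\<close>] \<open>f1 x y = 0 \<and> f2 x y = 0\<close> by simp
  moreover have "mu * alpha * x \<ge> 0" "mu * y \<ge> 0"
    using assms \<open>alpha \<ge> 1\<close> \<open>mu > 0\<close> by simp_all
  ultimately have "mu * alpha * x = 0" "mu * y = 0"
    by linarith+
  then show "x = 0 \<and> y = 0"
    using \<open>alpha \<ge> 1\<close> \<open>mu > 0\<close> by simp
qed (simp add: F1_def F2_def)

lemma solution_exp_stable:
  obtains A mu where "A > 0" "mu > 0"
    "\<And>x y t. solution x y \<Longrightarrow> x 0 \<ge> 0 \<Longrightarrow> y 0 \<ge> 0 \<Longrightarrow> t \<ge> 0 \<Longrightarrow>
      norm (x t, y t) \<le> A * norm (x 0, y 0) * exp (- mu * t)"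
proof -
  obtain alpha mu where "alpha \<ge> 1" "mu > 0"
    and decay: "mu * alpha \<le> alpha * (k - b) - k" "mu \<le> d - alpha * bt"
    by (rule lyapunov_weight_exists)
  have "norm (x t, y t) \<le> 2 * alpha * norm (x 0, y 0) * exp (- mu * t)"
    if sol: "solution x y" and init: "x 0 \<ge> 0" "y 0 \<ge> 0" and "t \<ge> 0" for x y t
  proof -
    have "x t \<ge> 0" "y t \<ge> 0"
      using solution_nonneg[OF sol init \<open>t \<ge> 0\<close>] by auto
    have "x 0 \<le> norm (x 0, y 0)" "y 0 \<le> norm (x 0, y 0)"
      using norm_fst_le[of "x 0" "y 0"] norm_snd_le[of "y 0" "x 0"] by auto
    moreover from this have "alpha * x 0 \<le> alpha * norm (x 0, y 0)"
      using \<open>alpha \<ge> 1\<close> by (intro mult_left_mono) auto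
    moreover have "norm (x 0, y 0) \<le> alpha * norm (x 0, y 0)"
      using \<open>alpha \<ge> 1\<close> mult_right_mono[of 1 alpha "norm (x 0, y 0)"] by simp
    ultimately have "alpha * x 0 + y 0 \<le> 2 * alpha * norm (x 0, y 0)"
      by linarith
    have "norm (x t, y t) \<le> x t + y t"
      using norm_Pair_le[of "x t" "y t"] \<open>x t \<ge> 0\<close> \<open>y t \<ge> 0\<close> by simp
    also have "\<dots> \<le> alpha * x t + y t"
      using \<open>alpha \<ge> 1\<close> \<open>x t \<ge> 0\<close> mult_right_mono[of 1 alpha "x t"] by simp
    also have "\<dots> \<le> (alpha * x 0 + y 0) * exp (- mu * t)"
      by (rule solution_weighted_decay[OF sol init \<open>alpha \<ge> 1\<close> decay \<open>t \<ge> 0\<close>])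
    also have "\<dots> \<le> 2 * alpha * norm (x 0, y 0) * exp (- mu * t)"
      using \<open>alpha * x 0 + y 0 \<le> 2 * alpha * norm (x 0, y 0)\<close> by simp
    finally show ?thesis .
  qed
  then show thesis
    using that[of "2 * alpha" mu] \<open>alpha \<ge> 1\<close> \<open>mu > 0\<close> by simp
qed

lemma zero_stable:
  assumes "e > 0"
  shows "\<exists>\<delta>>0. \<forall>x y. solution x y \<and> x 0 \<ge> 0 \<and> y 0 \<ge> 0 \<and> norm (x 0, y 0) < \<delta>
    \<longrightarrow> (\<forall>t\<ge>0. norm (x t, y t) < e)"
proof -
  obtain A mu where "A > 0" "mu > 0"
    and bound: "\<And>x y t. solution x y \<Longrightarrow> x 0 \<ge> 0 \<Longrightarrow> y 0 \<ge> 0 \<Longrightarrow> t \<ge> 0 \<Longrightarrow>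
      norm (x t, y t) \<le> A * norm (x 0, y 0) * exp (- mu * t)"
    using solution_exp_stable by blast
  have stays_small: "norm (x t, y t) < e"
    if "solution x y" "x 0 \<ge> 0" "y 0 \<ge> 0" "norm (x 0, y 0) < e / A" "t \<ge> 0" for x y t
  proof -
    have "norm (x t, y t) \<le> A * norm (x 0, y 0) * exp (- mu * t)"
      using bound that by blast
    also have "\<dots> \<le> A * norm (x 0, y 0)"
      using \<open>A > 0\<close> \<open>mu > 0\<close> \<open>t \<ge> 0\<close> by (simp add: mult_left_le)
    also have "\<dots> < e"
      using \<open>A > 0\<close> that(4) by (simp add: field_simps)
    finally show ?thesis .
  qed
  show ?thesis
  proof (intro exI[of _ "e / A"] conjI allI impI)
    show "e / A > 0"
      using \<open>A > 0\<close> \<open>e > 0\<close> by simp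
    fix x y and t :: real
    assume "solution x y \<and> x 0 \<ge> 0 \<and> y 0 \<ge> 0 \<and> norm (x 0, y 0) < e / A" "t \<ge> 0"
    then show "norm (x t, y t) < e"
      using stays_small[of x y t] by simp
  qed
qed

lemma solution_tendsto_zero:
  assumes "solution x y" "x 0 \<ge> 0" "y 0 \<ge> 0"
  shows "((\<lambda>t. (x t, y t)) \<longlongrightarrow> (0, 0)) at_top"
proof -
  obtain A mu where "A > 0" "mu > 0"
    and bound: "\<And>x y t. solution x y \<Longrightarrow> x 0 \<ge> 0 \<Longrightarrow> y 0 \<ge> 0 \<Longrightarrow> t \<ge> 0 \<Longrightarrow>
      norm (x t, y t) \<le> A * norm (x 0, y 0) * exp (- mu * t)"
    using solution_exp_stable by blast
  have "((\<lambda>t. exp (- mu * t)) \<longlongrightarrow> 0) at_top"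
    using \<open>mu > 0\<close> by real_asymp
  then have "((\<lambda>t. A * norm (x 0, y 0) * exp (- mu * t)) \<longlongrightarrow> 0) at_top"
    by (rule tendsto_mult_right_zero)
  moreover have "\<forall>\<^sub>F t in at_top. norm (x t, y t) \<le> A * norm (x 0, y 0) * exp (- mu * t)"
    using eventually_ge_at_top[of 0] by (rule eventually_mono) (rule bound[OF assms])
  ultimately have "((\<lambda>t. (x t, y t)) \<longlongrightarrow> 0) at_top"
    by (rule Lim_null_comparison[rotated])
  then show ?thesis
    by (simp add: zero_prod_def)
qed

end

theorem theorem6:
  fixes k d b eta1 eta2 c1 c2 ct1 ct2 :: real
  assumes "k > 0" "d > 0" "b \<ge> 0"
    and "eta1 \<ge> 0" "eta2 \<ge> 0" "c1 \<ge> 0" "c2 \<ge> 0" "ct1 \<ge> 0" "ct2 \<ge> 0"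
    and "eta1 + c1 > 0" "ct2 > 0"
  shows "\<exists>\<epsilon>>0. \<forall>bt. 0 \<le> bt \<and> bt < \<epsilon> \<and> b / k + bt / d < 1 \<longrightarrow>
    ( (\<forall>x y. x \<ge> 0 \<and> y \<ge> 0 \<longrightarrow>
          (F1 k b bt eta1 eta2 c1 c2 x y = 0 \<and> F2 k d eta1 eta2 ct1 ct2 x y = 0
            \<longleftrightarrow> x = 0 \<and> y = 0))
    \<and> (\<forall>e>0. \<exists>\<delta>>0. \<forall>N1 N2. is_sol k d b bt eta1 eta2 c1 c2 ct1 ct2 N1 N2
            \<and> N1 0 \<ge> 0 \<and> N2 0 \<ge> 0 \<and> norm (N1 0, N2 0) < \<delta>
            \<longrightarrow> (\<forall>t\<ge>0. norm (N1 t, N2 t) < e))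
    \<and> (\<forall>N1 N2. is_sol k d b bt eta1 eta2 c1 c2 ct1 ct2 N1 N2 \<and> N1 0 \<ge> 0 \<and> N2 0 \<ge> 0
            \<longrightarrow> ((\<lambda>t. (N1 t, N2 t)) \<longlongrightarrow> (0, 0)) at_top) )"
proof -
  have rates: "stable_rates k d b bt eta1 eta2 c1 c2 ct1 ct2"
    if "0 \<le> bt" "b / k + bt / d < 1" for bt
    using assms that by unfold_locales auto
  \<comment> \<open>Any \<open>\<epsilon>\<close> works: \<open>b / k + bt / d < 1\<close> alone suffices.\<close>
  show ?thesis
    using stable_rates.steady_state_iff_zero[OF rates] stable_rates.zero_stable[OF rates]
      stable_rates.solution_tendsto_zero[OF rates]
    by (intro exI[of _ 1]) auto
qed

end
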